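(* Let $r\ge 3$ and let $\mathcal H=(V,E)$ be an $r$-uniform bi-hypergraph. Then $\mathcal H$ is colorable if either of the following holds: (i) $|E|<(r-1)^{r-1}$; (ii) every edge of $\mathcal H$ shares at least one vertex with fewer than $(r-1)^{r-1}\mathrm{e}^{-1}-1$ other edges of $\mathcal H$, where $\mathrm{e}$ is the base of the natural logarithm.
   Context: A bi-hypergraph $\mathcal H=(V,E)$ consists of a finite vertex set $V$ and a set $E$ of subsets of $V$, called edges, with no edge contained in another. It is $r$-uniform if every edge has exactly $r$ elements. A mapping $f:V\to\mathbb N$ is a proper coloring of $\mathcal H$ if $1<|f(e)|<|e|$ for every $e\in E$, where $f(e)=\{f(v):v\in e\}$. $\mathcal H$ is colorable if it has a proper coloring, and uncolorable otherwise. *)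

theory Defs
  imports Complex_Main
begin

definition bi_hypergraph :: "'a set \<Rightarrow> 'a set set \<Rightarrow> bool" where
  "bi_hypergraph V E \<longleftrightarrow> finite V \<and> (\<forall>e\<in>E. e \<subseteq> V)
     \<and> (\<forall>e\<in>E. \<forall>e'\<in>E. e \<subseteq> e' \<longrightarrow> e = e')"

definition uniform :: "nat \<Rightarrow> 'a set set \<Rightarrow> bool" where
  "uniform r E \<longleftrightarrow> (\<forall>e\<in>E. card e = r)"

definition proper_coloring :: "'a set set \<Rightarrow> ('a \<Rightarrow> nat) \<Rightarrow> bool" where
  "proper_coloring E f \<longleftrightarrow> (\<forall>e\<in>E. 1 < card (f ` e) \<and> card (f ` e) < card e)"

definition colorable :: "'a set \<Rightarrow> 'a set set \<Rightarrow> bool" where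
  "colorable V E \<longleftrightarrow> (\<exists>f :: 'a \<Rightarrow> nat. proper_coloring E f)"

end

theory Submission imports Defs "HOL-Library.FuncSet" begin

text \<open>Colour with \<open>r - 1\<close> colours, so that every edge automatically receives fewer
  than \<open>r\<close> colours and a colouring is proper as soon as no edge is monochromatic.
  Under a uniformly random colouring an edge is monochromatic with probability
  \<open>(r - 1) ^ -(r - 1)\<close>, and this event is independent of all events of edges
  disjoint from it. Case (i) is then the union bound and case (ii) the symmetric
  Lovasz Local Lemma, both phrased by counting colourings instead of probabilities.\<close>

definition avoiding :: "'w set \<Rightarrow> ('i \<Rightarrow> 'w set) \<Rightarrow> 'i set \<Rightarrow> 'w set" where
  "avoiding \<Omega> A S = \<Omega> - (\<Union>i\<in>S. A i)"

lemma avoiding_empty [simp]: "avoiding \<Omega> A {} = \<Omega>"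
  by (simp add: avoiding_def)

lemma avoiding_insert: "avoiding \<Omega> A (insert i S) = avoiding \<Omega> A S - A i"
  by (auto simp: avoiding_def)

lemma avoiding_antimono: "S \<subseteq> T \<Longrightarrow> avoiding \<Omega> A T \<subseteq> avoiding \<Omega> A S"
  by (auto simp: avoiding_def)

lemma card_avoiding_insert:
  assumes "finite \<Omega>"
  shows "real (card (avoiding \<Omega> A (insert i S)))
       = real (card (avoiding \<Omega> A S)) - real (card (A i \<inter> avoiding \<Omega> A S))"
proof -
  have fin: "finite (avoiding \<Omega> A S)"
    using assms by (simp add: avoiding_def)
  have "card (avoiding \<Omega> A (insert i S))
      = card (avoiding \<Omega> A S) - card (avoiding \<Omega> A S \<inter> A i)"
    unfolding avoiding_insert using fin by (simp add: card_Diff_subset_Int)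
  moreover have "card (avoiding \<Omega> A S \<inter> A i) \<le> card (avoiding \<Omega> A S)"
    using fin by (simp add: card_mono)
  ultimately show ?thesis
    by (simp add: of_nat_diff Int_commute)
qed

lemma avoiding_nonempty_union_bound:
  assumes "finite \<Omega>" "\<Omega> \<noteq> {}" "finite I"
    and sub: "\<And>i. i \<in> I \<Longrightarrow> A i \<subseteq> \<Omega>"
    and small: "\<And>i. i \<in> I \<Longrightarrow> card (A i) * K \<le> card \<Omega>"
    and few: "card I < K"
  shows "avoiding \<Omega> A I \<noteq> {}"
proof
  assume "avoiding \<Omega> A I = {}"
  then have "\<Omega> \<subseteq> (\<Union>i\<in>I. A i)"
    by (auto simp: avoiding_def)
  then have "card \<Omega> \<le> card (\<Union>i\<in>I. A i)"
    using assms(3) sub by (intro card_mono) (auto intro: finite_subset[OF _ assms(1)])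
  also have "\<dots> \<le> (\<Sum>i\<in>I. card (A i))"
    using assms(3) by (rule card_UN_le)
  finally have "card \<Omega> * K \<le> (\<Sum>i\<in>I. card (A i) * K)"
    by (metis mult_le_mono1 sum_distrib_right)
  also have "\<dots> \<le> card I * card \<Omega>"
    using sum_mono[of I "\<lambda>i. card (A i) * K" "\<lambda>_. card \<Omega>"] small by simp
  also have "\<dots> < K * card \<Omega>"
    using few assms(1,2) by (simp add: card_gt_0_iff)
  finally show False
    by (simp add: mult.commute)
qed

lemma card_avoiding_union_ge:
  fixes x :: real
  assumes "finite \<Omega>" "x \<le> 1" "finite U" "T \<inter> U = {}"
    and ratio: "\<And>T' i. T \<subseteq> T' \<Longrightarrow> T' \<subset> T \<union> U \<Longrightarrow> i \<in> U - T' \<Longrightarrow>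
        real (card (A i \<inter> avoiding \<Omega> A T')) \<le> x * real (card (avoiding \<Omega> A T'))"
  shows "(1 - x) ^ card U * real (card (avoiding \<Omega> A T)) \<le> real (card (avoiding \<Omega> A (T \<union> U)))"
  using assms(3-5)
proof (induction U rule: finite_induct)
  case empty
  then show ?case by simp
next
  case (insert a U)
  let ?N = "\<lambda>S. real (card (avoiding \<Omega> A S))"
  have IH: "(1 - x) ^ card U * ?N T \<le> ?N (T \<union> U)"
    using insert.prems by (intro insert.IH) (auto intro!: insert.prems(2))
  have "a \<notin> T \<union> U"
    using insert.hyps(2) insert.prems(1) by auto
  then have "real (card (A a \<inter> avoiding \<Omega> A (T \<union> U))) \<le> x * ?N (T \<union> U)"
    by (intro insert.prems(2)) auto
  then have "(1 - x) * ?N (T \<union> U) \<le> ?N (T \<union> insert a U)"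
    using card_avoiding_insert[OF assms(1), of A a "T \<union> U"] by (simp add: algebra_simps)
  moreover have "(1 - x) ^ card (insert a U) * ?N T \<le> (1 - x) * ?N (T \<union> U)"
    using IH assms(2) insert.hyps by (simp add: mult.assoc mult_left_mono)
  ultimately show ?case
    by linarith
qed

text \<open>Split \<open>S\<close> into the neighbours \<open>S\<^sub>1\<close> of \<open>i\<close> and the rest \<open>S\<^sub>2\<close>: avoiding
  \<open>S\<^sub>1\<close> on top of \<open>S\<^sub>2\<close> keeps a fraction at least \<open>(1 - x) ^ d\<close> of the outcomes
  (by the induction hypothesis and \<open>card_avoiding_union_ge\<close>), while \<open>i\<close> is
  independent of \<open>S\<^sub>2\<close>.\<close>
lemma lll_ratio_bound:
  fixes x p :: real and d :: nat
  assumes "finite \<Omega>" "0 \<le> x" "x \<le> 1"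
    and dep: "\<And>i. i \<in> I \<Longrightarrow> finite (D i) \<and> card (D i) \<le> d"
    and indep: "\<And>i S. i \<in> I \<Longrightarrow> S \<subseteq> I - insert i (D i) \<Longrightarrow>
        real (card (A i \<inter> avoiding \<Omega> A S)) \<le> p * real (card (avoiding \<Omega> A S))"
    and p: "p \<le> x * (1 - x) ^ d"
  shows "finite S \<Longrightarrow> S \<subseteq> I \<Longrightarrow> i \<in> I - S \<Longrightarrow>
    real (card (A i \<inter> avoiding \<Omega> A S)) \<le> x * real (card (avoiding \<Omega> A S))"
proof (induction "card S" arbitrary: S i rule: less_induct)
  case less
  let ?N = "\<lambda>S. real (card (avoiding \<Omega> A S))"
  define S\<^sub>1 where "S\<^sub>1 = S \<inter> D i"
  define S\<^sub>2 where "S\<^sub>2 = S - D i"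
  have S: "S = S\<^sub>2 \<union> S\<^sub>1"
    by (auto simp: S\<^sub>1_def S\<^sub>2_def)
  have "card S\<^sub>1 \<le> d"
    using dep[of i] less.prems(3) card_mono[of "D i" S\<^sub>1] by (auto simp: S\<^sub>1_def)
  then have "(1 - x) ^ d \<le> (1 - x) ^ card S\<^sub>1"
    using assms(2,3) by (intro power_decreasing) auto
  moreover have "(1 - x) ^ card S\<^sub>1 * ?N S\<^sub>2 \<le> ?N S"
  proof -
    have "(1 - x) ^ card S\<^sub>1 * ?N S\<^sub>2 \<le> ?N (S\<^sub>2 \<union> S\<^sub>1)"
    proof (rule card_avoiding_union_ge[OF assms(1,3)])
      fix T' j assume "S\<^sub>2 \<subseteq> T'" "T' \<subset> S\<^sub>2 \<union> S\<^sub>1" "j \<in> S\<^sub>1 - T'"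
      moreover have "card T' < card S"
        using \<open>T' \<subset> S\<^sub>2 \<union> S\<^sub>1\<close> S less.prems(1) by (simp add: psubset_card_mono)
      ultimately show "real (card (A j \<inter> avoiding \<Omega> A T')) \<le> x * ?N T'"
        using S less.prems by (intro less.hyps) (auto intro: finite_subset)
    qed (use less.prems(1) in \<open>auto simp: S\<^sub>1_def S\<^sub>2_def\<close>)
    then show ?thesis
      using S by simp
  qed
  ultimately have grow: "(1 - x) ^ d * ?N S\<^sub>2 \<le> ?N S"
    by (meson mult_right_mono of_nat_0_le_iff order_trans)
  have "real (card (A i \<inter> avoiding \<Omega> A S)) \<le> real (card (A i \<inter> avoiding \<Omega> A S\<^sub>2))"
    using assms(1) avoiding_antimono[of S\<^sub>2 S \<Omega> A]
    by (auto intro!: card_mono simp: S\<^sub>2_def avoiding_def)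
  also have "\<dots> \<le> p * ?N S\<^sub>2"
    using less.prems by (intro indep) (auto simp: S\<^sub>2_def)
  also have "\<dots> \<le> x * ((1 - x) ^ d * ?N S\<^sub>2)"
    using p by (metis mult.assoc mult_right_mono of_nat_0_le_iff)
  also have "\<dots> \<le> x * ?N S"
    using grow assms(2) by (rule mult_left_mono)
  finally show ?case .
qed

lemma lovasz_local_lemma_counting:
  fixes x p :: real and d :: nat
  assumes "finite \<Omega>" "\<Omega> \<noteq> {}" "finite I" "0 \<le> x" "x < 1"
    and dep: "\<And>i. i \<in> I \<Longrightarrow> finite (D i) \<and> card (D i) \<le> d"
    and indep: "\<And>i S. i \<in> I \<Longrightarrow> S \<subseteq> I - insert i (D i) \<Longrightarrow>
        real (card (A i \<inter> avoiding \<Omega> A S)) \<le> p * real (card (avoiding \<Omega> A S))"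
    and p: "p \<le> x * (1 - x) ^ d"
  shows "avoiding \<Omega> A I \<noteq> {}"
proof -
  have "(1 - x) ^ card I * real (card (avoiding \<Omega> A {})) \<le> real (card (avoiding \<Omega> A ({} \<union> I)))"
  proof (rule card_avoiding_union_ge[OF assms(1) less_imp_le[OF assms(5)] assms(3)])
    fix T' i assume "T' \<subset> {} \<union> I" "i \<in> I - T'"
    then show "real (card (A i \<inter> avoiding \<Omega> A T')) \<le> x * real (card (avoiding \<Omega> A T'))"
      using assms(3,5) by (intro lll_ratio_bound[where I = I and D = D, OF assms(1,4) _ dep indep p])
        (auto intro: finite_subset)
  qed auto
  moreover have "0 < (1 - x) ^ card I * real (card (avoiding \<Omega> A {}))"
    using assms(1,2,5) by (simp add: card_gt_0_iff)
  ultimately show ?thesis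
    by auto
qed

lemma lll_symmetric_weight:
  "1 / (exp 1 * (real d + 1)) \<le> 1 / (real d + 2) * (1 - 1 / (real d + 2)) ^ d"
proof -
  define a :: real where "a = 1 + 1 / (real d + 1)"
  have "a > 0"
    unfolding a_def by (simp add: add_pos_nonneg)
  have "a ^ (d + 1) \<le> exp (1 / (real d + 1)) ^ (d + 1)"
    using \<open>a > 0\<close> unfolding a_def by (intro power_mono exp_ge_add_one_self) auto
  also have "\<dots> = exp (real (d + 1) * (1 / (real d + 1)))"
    by (rule exp_of_nat_mult[symmetric])
  also have "\<dots> = exp 1"
    by simp
  finally have "(real d + 1) * a ^ (d + 1) \<le> exp 1 * (real d + 1)"
    by (simp add: mult.commute)
  moreover have "1 / (real d + 2) * (1 - 1 / (real d + 2)) ^ d = 1 / ((real d + 1) * a ^ (d + 1))"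
  proof -
    have "1 - 1 / (real d + 2) = 1 / a" "real d + 2 = (real d + 1) * a"
      unfolding a_def by (simp_all add: field_simps)
    then show ?thesis
      by (simp add: power_one_over)
  qed
  ultimately show ?thesis
    using \<open>a > 0\<close> by (simp add: frac_le)
qed

corollary lovasz_local_lemma_symmetric:
  fixes p :: real and d :: nat
  assumes "finite \<Omega>" "\<Omega> \<noteq> {}" "finite I"
    and dep: "\<And>i. i \<in> I \<Longrightarrow> finite (D i) \<and> card (D i) \<le> d"
    and indep: "\<And>i S. i \<in> I \<Longrightarrow> S \<subseteq> I - insert i (D i) \<Longrightarrow>
        real (card (A i \<inter> avoiding \<Omega> A S)) \<le> p * real (card (avoiding \<Omega> A S))"
    and p: "exp 1 * p * (real d + 1) \<le> 1"
  shows "avoiding \<Omega> A I \<noteq> {}"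
proof (rule lovasz_local_lemma_counting[OF assms(1-3) _ _ dep indep])
  have "p \<le> 1 / (exp 1 * (real d + 1))"
    using p by (simp add: pos_le_divide_eq mult.commute mult.left_commute)
  then show "p \<le> 1 / (real d + 2) * (1 - 1 / (real d + 2)) ^ d"
    using lll_symmetric_weight by (rule order_trans)
qed auto

definition monochromatic :: "('a \<Rightarrow> 'c) \<Rightarrow> 'a set \<Rightarrow> bool" where
  "monochromatic f e \<longleftrightarrow> (\<exists>c. \<forall>v\<in>e. f v = c)"

definition colorings :: "'a set \<Rightarrow> nat \<Rightarrow> ('a \<Rightarrow> nat) set" where
  "colorings V m = PiE V (\<lambda>_. {..<m})"

definition monochromatic_colorings :: "'a set \<Rightarrow> nat \<Rightarrow> 'a set \<Rightarrow> ('a \<Rightarrow> nat) set" where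
  "monochromatic_colorings V m e = {f \<in> colorings V m. monochromatic f e}"

definition edge_neighbours :: "'a set set \<Rightarrow> 'a set \<Rightarrow> 'a set set" where
  "edge_neighbours E e = {e' \<in> E. e' \<noteq> e \<and> e' \<inter> e \<noteq> {}}"

lemma card_PiE_split:
  assumes "U \<subseteq> V"
  shows "card {f \<in> PiE V B. P (restrict f U) \<and> Q (restrict f (V - U))}
       = card {g \<in> PiE U B. P g} * card {h \<in> PiE (V - U) B. Q h}"
proof -
  let ?split = "\<lambda>f. (restrict f U, restrict f (V - U))"
  let ?merge = "\<lambda>(g, h). \<lambda>x. if x \<in> U then g x else h x"
  have split_merge: "?split (?merge (g, h)) = (g, h)"
    if "g \<in> PiE U B" "h \<in> PiE (V - U) B" for g h
    using that by (auto simp: PiE_iff extensional_def restrict_def fun_eq_iff)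
  have "bij_betw ?split {f \<in> PiE V B. P (restrict f U) \<and> Q (restrict f (V - U))}
      ({g \<in> PiE U B. P g} \<times> {h \<in> PiE (V - U) B. Q h})"
  proof (rule bij_betwI[where g = ?merge])
    show "?split \<in> {f \<in> PiE V B. P (restrict f U) \<and> Q (restrict f (V - U))}
        \<rightarrow> {g \<in> PiE U B. P g} \<times> {h \<in> PiE (V - U) B. Q h}"
      using assms by auto
    show "?merge \<in> {g \<in> PiE U B. P g} \<times> {h \<in> PiE (V - U) B. Q h}
        \<rightarrow> {f \<in> PiE V B. P (restrict f U) \<and> Q (restrict f (V - U))}"
      using assms split_merge by (fastforce simp: PiE_iff extensional_def)
    show "?merge (?split f) = f"
      if "f \<in> {f \<in> PiE V B. P (restrict f U) \<and> Q (restrict f (V - U))}" for f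
      using that by (auto simp: PiE_iff extensional_def)
    show "?split (?merge gh) = gh"
      if "gh \<in> {g \<in> PiE U B. P g} \<times> {h \<in> PiE (V - U) B. Q h}" for gh
      using that split_merge by auto
  qed
  then show ?thesis
    by (simp add: bij_betw_same_card card_cartesian_product)
qed

lemma monochromatic_restrict: "e \<subseteq> U \<Longrightarrow> monochromatic (restrict f U) e \<longleftrightarrow> monochromatic f e"
  by (auto simp: monochromatic_def subset_iff)

lemma card_monochromatic_PiE:
  assumes "e \<noteq> {}"
  shows "card {g \<in> PiE e (\<lambda>_. C). monochromatic g e} = card C"
proof -
  have "bij_betw (\<lambda>c. restrict (\<lambda>_. c) e) C {g \<in> PiE e (\<lambda>_. C). monochromatic g e}"
  proof (rule bij_betwI[where g = "\<lambda>g. g (SOME v. v \<in> e)"])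
    have "(SOME v. v \<in> e) \<in> e"
      using assms by (simp add: some_in_eq)
    then show "(\<lambda>g. g (SOME v. v \<in> e)) \<in> {g \<in> PiE e (\<lambda>_. C). monochromatic g e} \<rightarrow> C"
      and "\<And>c. c \<in> C \<Longrightarrow> restrict (\<lambda>_. c) e (SOME v. v \<in> e) = c"
      and "\<And>g. g \<in> {g \<in> PiE e (\<lambda>_. C). monochromatic g e} \<Longrightarrow>
             restrict (\<lambda>_. g (SOME v. v \<in> e)) e = g"
      by (auto simp: PiE_iff monochromatic_def extensional_def fun_eq_iff)
  qed (auto simp: monochromatic_def)
  then show ?thesis
    by (simp add: bij_betw_same_card)
qed

text \<open>Since no edge of \<open>S\<close> meets \<open>e\<close>, a colouring of \<open>V\<close> splits into independent
  colourings of \<open>e\<close> and of \<open>V - e\<close>; exactly \<open>m\<close> of the \<open>m ^ card e\<close> colourings of \<open>e\<close>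
  are monochromatic.\<close>
lemma card_monochromatic_colorings_avoiding:
  assumes "finite e" "e \<subseteq> V" "e \<noteq> {}" "\<And>e'. e' \<in> S \<Longrightarrow> e' \<subseteq> V - e"
  shows "card (monochromatic_colorings V m e
                \<inter> avoiding (colorings V m) (monochromatic_colorings V m) S) * m ^ (card e - 1)
       = card (avoiding (colorings V m) (monochromatic_colorings V m) S)"
proof -
  let ?Q = "\<lambda>h. \<forall>e'\<in>S. \<not> monochromatic h e'"
  let ?G = "card {h \<in> PiE (V - e) (\<lambda>_. {..<m}). ?Q h}"
  have Q: "?Q f \<longleftrightarrow> ?Q (restrict f (V - e))" for f
    using assms(4) by (simp add: monochromatic_restrict)
  have "card (avoiding (colorings V m) (monochromatic_colorings V m) S)
      = card {f \<in> PiE V (\<lambda>_. {..<m}). True \<and> ?Q (restrict f (V - e))}"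
    unfolding avoiding_def monochromatic_colorings_def colorings_def using Q
    by (intro arg_cong[where f = card]) auto
  also have "\<dots> = m ^ card e * ?G"
    using card_PiE_split[OF assms(2), of "\<lambda>_. {..<m}" "\<lambda>_. True" ?Q] assms(1)
    by (simp add: card_PiE)
  finally have avoid: "card (avoiding (colorings V m) (monochromatic_colorings V m) S) = m ^ card e * ?G" .
  have "card (monochromatic_colorings V m e \<inter> avoiding (colorings V m) (monochromatic_colorings V m) S)
      = card {f \<in> PiE V (\<lambda>_. {..<m}). monochromatic (restrict f e) e \<and> ?Q (restrict f (V - e))}"
    unfolding avoiding_def monochromatic_colorings_def colorings_def using Q
    by (intro arg_cong[where f = card]) (auto simp: monochromatic_restrict)
  also have "\<dots> = m * ?G"
    using card_PiE_split[OF assms(2), of "\<lambda>_. {..<m}" "\<lambda>g. monochromatic g e" ?Q] assms(3)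
    by (simp add: card_monochromatic_PiE)
  finally show ?thesis
    using avoid assms(1,3) by (simp add: power_eq_if card_gt_0_iff)
qed

lemma uniform_edgeD:
  "uniform r E \<Longrightarrow> r \<ge> 1 \<Longrightarrow> e \<in> E \<Longrightarrow> card e = r \<and> finite e \<and> e \<noteq> {}"
  by (auto simp: uniform_def intro: card_ge_0_finite)

lemma colorable_if_avoiding_monochromatic:
  assumes "r \<ge> 1" "\<forall>e\<in>E. e \<subseteq> V" "uniform r E"
    and "avoiding (colorings V (r - 1)) (monochromatic_colorings V (r - 1)) E \<noteq> {}"
  shows "colorable V E"
proof -
  obtain f where f: "f \<in> colorings V (r - 1)" "\<And>e. e \<in> E \<Longrightarrow> \<not> monochromatic f e"
    using assms(4) by (auto simp: avoiding_def monochromatic_colorings_def)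
  have "1 < card (f ` e) \<and> card (f ` e) < card e" if "e \<in> E" for e
  proof
    have e: "card e = r" "finite e" "e \<noteq> {}"
      using uniform_edgeD[OF assms(3,1) that] by simp_all
    have "f ` e \<subseteq> {..<r - 1}"
      using f(1) that assms(2) by (auto simp: colorings_def PiE_iff)
    then have "card (f ` e) \<le> r - 1"
      using card_mono[of "{..<r - 1}" "f ` e"] by simp
    then show "card (f ` e) < card e"
      using e(1) assms(1) by linarith
    have "card (f ` e) \<noteq> 1"
      using f(2)[OF that] by (auto simp: card_1_singleton_iff monochromatic_def)
    moreover have "card (f ` e) \<noteq> 0"
      using e(2,3) by simp
    ultimately show "1 < card (f ` e)"
      by linarith
  qed
  then show ?thesis
    unfolding colorable_def proper_coloring_def by blast
qed

lemma colorings_finite_nonempty: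
  "finite V \<Longrightarrow> 0 < m \<Longrightarrow> finite (colorings V m) \<and> colorings V m \<noteq> {}"
  by (auto simp: colorings_def finite_PiE PiE_eq_empty_iff)

lemma finite_edges: "finite V \<Longrightarrow> \<forall>e\<in>E. e \<subseteq> V \<Longrightarrow> finite E"
  by (rule finite_subset[of E "Pow V"]) auto

lemma avoiding_monochromatic_nonempty_if_few_edges:
  assumes "finite V" "\<forall>e\<in>E. e \<subseteq> V" "uniform r E" "r \<ge> 1" "0 < m"
    and few: "card E < m ^ (r - 1)"
  shows "avoiding (colorings V m) (monochromatic_colorings V m) E \<noteq> {}"
proof (rule avoiding_nonempty_union_bound[OF _ _ finite_edges[OF assms(1,2)] _ _ few])
  show "finite (colorings V m)" "colorings V m \<noteq> {}"
    using colorings_finite_nonempty[OF assms(1,5)] by simp_all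
  show "monochromatic_colorings V m e \<subseteq> colorings V m" for e
    by (auto simp: monochromatic_colorings_def)
  fix e assume "e \<in> E"
  moreover have "monochromatic_colorings V m e \<inter> colorings V m = monochromatic_colorings V m e"
    by (auto simp: monochromatic_colorings_def)
  ultimately show "card (monochromatic_colorings V m e) * m ^ (r - 1) \<le> card (colorings V m)"
    using card_monochromatic_colorings_avoiding[of e V "{}" m] uniform_edgeD[OF assms(3,4)] assms(2)
    by simp
qed

lemma avoiding_monochromatic_nonempty_if_sparse:
  assumes "finite V" "\<forall>e\<in>E. e \<subseteq> V" "uniform r E" "r \<ge> 1" "0 < m"
    and sparse: "\<forall>e\<in>E. exp 1 * (real (card (edge_neighbours E e)) + 1) \<le> real m ^ (r - 1)"
  shows "avoiding (colorings V m) (monochromatic_colorings V m) E \<noteq> {}"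
proof (cases "E = {}")
  case True
  then show ?thesis
    using colorings_finite_nonempty[OF assms(1,5)] by simp
next
  case False
  have "finite E"
    using assms(1,2) by (rule finite_edges)
  define d where "d = Max ((\<lambda>e. card (edge_neighbours E e)) ` E)"
  have "d \<in> (\<lambda>e. card (edge_neighbours E e)) ` E"
    unfolding d_def using \<open>finite E\<close> False by (intro Max_in) auto
  then obtain e\<^sub>0 where "e\<^sub>0 \<in> E" "card (edge_neighbours E e\<^sub>0) = d"
    by auto
  show ?thesis
  proof (rule lovasz_local_lemma_symmetric[where D = "edge_neighbours E" and d = d
        and p = "1 / real m ^ (r - 1)"])
    show "finite (edge_neighbours E e) \<and> card (edge_neighbours E e) \<le> d" if "e \<in> E" for e
      using that \<open>finite E\<close> by (auto simp: d_def edge_neighbours_def)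
    show "real (card (monochromatic_colorings V m e
            \<inter> avoiding (colorings V m) (monochromatic_colorings V m) S))
        \<le> 1 / real m ^ (r - 1) * real (card (avoiding (colorings V m) (monochromatic_colorings V m) S))"
      if "e \<in> E" "S \<subseteq> E - insert e (edge_neighbours E e)" for e S
    proof -
      have "e' \<subseteq> V - e" if "e' \<in> S" for e'
        using \<open>e' \<in> S\<close> \<open>S \<subseteq> _\<close> assms(2) by (auto simp: edge_neighbours_def)
      then have "real (card (monochromatic_colorings V m e
              \<inter> avoiding (colorings V m) (monochromatic_colorings V m) S)) * real m ^ (r - 1)
          = real (card (avoiding (colorings V m) (monochromatic_colorings V m) S))"
        using card_monochromatic_colorings_avoiding[of e V S m] uniform_edgeD[OF assms(3,4) \<open>e \<in> E\<close>]
          \<open>e \<in> E\<close> assms(2)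
        by (simp flip: of_nat_mult of_nat_power)
      then show ?thesis
        using assms(5) by (simp add: field_simps)
    qed
    show "exp 1 * (1 / real m ^ (r - 1)) * (real d + 1) \<le> 1"
      using sparse \<open>e\<^sub>0 \<in> E\<close> \<open>card (edge_neighbours E e\<^sub>0) = d\<close> assms(5)
      by (auto simp: field_simps)
  qed (use colorings_finite_nonempty[OF assms(1,5)] \<open>finite E\<close> in simp_all)
qed

lemma exp_one_mult_succ_le: "(c :: real) < K * exp (-1) - 1 \<Longrightarrow> exp 1 * (c + 1) \<le> K"
proof -
  assume "c < K * exp (-1) - 1"
  then have "exp 1 * (c + 1) < exp 1 * (K * exp (-1))"
    by simp
  then show ?thesis
    by (simp add: mult.left_commute flip: exp_add)
qed

theorem theorem1p1:
  fixes V :: "'a set" and E :: "'a set set" and r :: nat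
  assumes "r \<ge> 3"
    and "bi_hypergraph V E"
    and "uniform r E"
    and "card E < (r - 1) ^ (r - 1)
         \<or> (\<forall>e\<in>E. real (card {e'\<in>E. e' \<noteq> e \<and> e' \<inter> e \<noteq> {}})
                    < real ((r - 1) ^ (r - 1)) * exp (-1) - 1)"
  shows "colorable V E"
proof -
  have V: "finite V" "\<forall>e\<in>E. e \<subseteq> V" and r: "r \<ge> 1" "0 < r - 1"
    using assms(1,2) by (auto simp: bi_hypergraph_def)
  have "avoiding (colorings V (r - 1)) (monochromatic_colorings V (r - 1)) E \<noteq> {}"
    using assms(4)
  proof
    assume "card E < (r - 1) ^ (r - 1)"
    then show ?thesis
      by (rule avoiding_monochromatic_nonempty_if_few_edges[OF V assms(3) r])
  next
    assume sparse: "\<forall>e\<in>E. real (card {e'\<in>E. e' \<noteq> e \<and> e' \<inter> e \<noteq> {}})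
                    < real ((r - 1) ^ (r - 1)) * exp (-1) - 1"
    have "exp 1 * (real (card (edge_neighbours E e)) + 1) \<le> real (r - 1) ^ (r - 1)" if "e \<in> E" for e
      using sparse that unfolding edge_neighbours_def
      by (intro exp_one_mult_succ_le) (simp add: Ball_def)
    then show ?thesis
      by (intro avoiding_monochromatic_nonempty_if_sparse[OF V assms(3) r]) blast
  qed
  then show ?thesis
    by (rule colorable_if_avoiding_monochromatic[OF r(1) V(2) assms(3)])
qed

end
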